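(* Let $G=(V,E)$ be a graph, $k\ge1$ an integer, and let $G_k$ be obtained from $G$ by performing a $k$-comb operation at every vertex of $G$. Let $p(k,u,x)=(1+x)^k(xu^2+1)-xu^2$. Then $$P(G_k;u,x)=p(k,u,x)^{|V|}\,P\big(G;u,\,x/p(k,u,x)\big)$$ (as an identity of rational functions; the right-hand side is a polynomial).
   Context: Graphs are finite, undirected, without multiple edges, self loops allowed; $G[A]$ is the induced subgraph on $A$, and $rk(G)$ is the $\mathbb{F}_2$-rank of the adjacency matrix ($m_{ij}=1$ iff $\{i,j\}\in E$, diagonal entry $1$ iff self loop; empty graph rank $0$). $P(G;u,x)=\sum_{A\subseteq V}x^{|A|}u^{rk(G[A])}$, with $0^0=1$. The $k$-comb of $G$ at a vertex $a$ is the graph $(V\cup\{a_1,\dots,a_k\},\,E\cup\{\{a,a_1\},\dots,\{a,a_k\}\})$ with $a_1,\dots,a_k$ new vertices (no self loops). $G_k$ is obtained by adding such a $k$-comb (with fresh new vertices) at each original vertex $a\in V$. *)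

theory Defs
  imports Complex_Main
begin

text \<open>A graph is a pair (V, E): V a finite vertex set, E a set of edges, each edge
 a set of one (self loop) or two vertices of V.\<close>

definition is_graph :: "'a set \<Rightarrow> 'a set set \<Rightarrow> bool" where
  "is_graph V E \<longleftrightarrow> finite V \<and> (\<forall>e\<in>E. e \<subseteq> V \<and> (card e = 1 \<or> card e = 2))"

text \<open>Rows of the adjacency matrix of G[A] over F_2 indexed by a set S \<subseteq> A are linearly
 independent iff no nonempty subset T of S has rows summing to zero mod 2.\<close>

definition rows_indep :: "'a set set \<Rightarrow> 'a set \<Rightarrow> 'a set \<Rightarrow> bool" where
  "rows_indep E A S \<longleftrightarrow>
     (\<forall>T. T \<subseteq> S \<and> T \<noteq> {} \<longrightarrow> (\<exists>j\<in>A. odd (card {i\<in>T. {i, j} \<in> E})))"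

text \<open>F_2-rank of the adjacency matrix of the induced subgraph G[A]
 (maximal number of linearly independent rows); rank of the empty graph is 0.\<close>

definition rk_induced :: "'a set set \<Rightarrow> 'a set \<Rightarrow> nat" where
  "rk_induced E A = Max {card S | S. S \<subseteq> A \<and> rows_indep E A S}"

definition interlace_poly :: "'a set \<Rightarrow> 'a set set \<Rightarrow> real \<Rightarrow> real \<Rightarrow> real" where
  "interlace_poly V E u x = (\<Sum>A\<in>Pow V. x ^ card A * u ^ rk_induced E A)"

text \<open>G_k: a k-comb at every vertex a, with fresh vertices Inr (a,1), ..., Inr (a,k).\<close>

definition comb_all_V :: "'a set \<Rightarrow> nat \<Rightarrow> ('a + 'a \<times> nat) set" where
  "comb_all_V V k = Inl ` V \<union> {Inr (a, i) | a i. a \<in> V \<and> 1 \<le> i \<and> i \<le> k}"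

definition comb_all_E :: "'a set \<Rightarrow> 'a set set \<Rightarrow> nat \<Rightarrow> ('a + 'a \<times> nat) set set" where
  "comb_all_E V E k = (image Inl) ` E \<union> {{Inl a, Inr (a, i)} | a i. a \<in> V \<and> 1 \<le> i \<and> i \<le> k}"

definition comb_p :: "nat \<Rightarrow> real \<Rightarrow> real \<Rightarrow> real" where
  "comb_p k u x = (1 + x) ^ k * (x * u\<^sup>2 + 1) - x * u\<^sup>2"

end

theory Submission
  imports Defs
begin

text \<open>
  Two facts about the F_2-rank of induced subgraphs drive the proof. Let M be a
  nonempty set of pendant vertices all attached to the same vertex w. If w is
  present, the rank of G[Y \<union> M] is rk G[Y - {w}] + 2 (the rows of w and of one
  leaf are independent of everything else, and the other leaves repeat that
  leaf's row); if w is absent, the leaves are isolated and do not change the rank.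
  Summing over the subsets of the leaves of one comb gives the comb recursion
    P(G + comb at w) = P(G) + ((1+x)^k - 1) (1 + x u^2) P(G - w).
  Attaching the combs one vertex at a time, this is matched against the same
  recursion for  \<Sum>B. x^|B| u^rk(G[B]) p^|W - B|,  W the set of vertices already
  carrying a comb, which proves the theorem by induction on W; the final step
  rescales x by p. Invariance of the rank under isomorphism identifies G with
  its copy Inl ` V inside G_k.
\<close>

lemma rows_indep_empty [simp]: "rows_indep E A {}"
  unfolding rows_indep_def by blast

lemma rows_indep_subset: "rows_indep E A S \<Longrightarrow> S' \<subseteq> S \<Longrightarrow> rows_indep E A S'"
  unfolding rows_indep_def by blast

lemma rows_indep_mono_cols: "rows_indep E A S \<Longrightarrow> A \<subseteq> A' \<Longrightarrow> rows_indep E A' S"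
  unfolding rows_indep_def by blast

lemma rows_indep_drop_cols:
  assumes indep: "rows_indep E A S"
    and zero: "\<And>i j. i \<in> S \<Longrightarrow> j \<in> A - A' \<Longrightarrow> {i, j} \<notin> E"
  shows "rows_indep E A' S"
  unfolding rows_indep_def
proof (intro allI impI)
  fix T assume T: "T \<subseteq> S \<and> T \<noteq> {}"
  then obtain j where j: "j \<in> A" "odd (card {i \<in> T. {i, j} \<in> E})"
    using indep unfolding rows_indep_def by blast
  have "j \<in> A'"
  proof (rule ccontr)
    assume "j \<notin> A'"
    then have "{i \<in> T. {i, j} \<in> E} = {}" using zero T j(1) by blast
    then show False using j(2) by (metis card.empty even_zero)
  qed
  then show "\<exists>j\<in>A'. odd (card {i \<in> T. {i, j} \<in> E})" using j(2) by blast
qed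

lemma rows_indep_nonzero_row:
  assumes "rows_indep E A S" "i \<in> S"
  shows "\<exists>j\<in>A. {i, j} \<in> E"
proof -
  have "{i} \<subseteq> S \<and> {i} \<noteq> {}" using assms(2) by simp
  then obtain j where "j \<in> A" "odd (card {i' \<in> {i}. {i', j} \<in> E})"
    using assms(1) unfolding rows_indep_def by blast
  then have "{i' \<in> {i}. {i', j} \<in> E} \<noteq> {}" by (metis card.empty even_zero)
  then show ?thesis using \<open>j \<in> A\<close> by blast
qed

text \<open>Parity of a symmetric difference: the sum of two rows (over F_2) is the
  row of their symmetric difference.\<close>

lemma odd_card_sym_diff:
  assumes "finite A" "finite B"
  shows "odd (card (sym_diff A B)) \<longleftrightarrow> odd (card A) \<noteq> odd (card B)"
proof -
  have parts: "(A - B) \<union> (A \<inter> B) = A" "(B - A) \<union> (A \<inter> B) = B" by blast+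
  have "card ((A - B) \<union> (A \<inter> B)) = card (A - B) + card (A \<inter> B)"
    using assms by (intro card_Un_disjoint) auto
  then have "card A = card (A - B) + card (A \<inter> B)" using parts by simp
  moreover have "card ((B - A) \<union> (A \<inter> B)) = card (B - A) + card (A \<inter> B)"
    using assms by (intro card_Un_disjoint) auto
  then have "card B = card (B - A) + card (A \<inter> B)" using parts by simp
  moreover have "card (sym_diff A B) = card (A - B) + card (B - A)"
    using assms by (intro card_Un_disjoint) auto
  ultimately show ?thesis by presburger
qed

text \<open>Deleting one column lowers the number of independent rows by at most one:
  if S becomes dependent, witnessed by T0, then S - {t} is independent for any
  t \<in> T0, since a dependent T \<subseteq> S - {t} would make sym_diff T T0 dependent in S.\<close>

lemma rows_indep_remove_column:
  assumes "finite S" "rows_indep E (insert j A) S"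
  obtains S' where "S' \<subseteq> S" "card S \<le> Suc (card S')" "rows_indep E A S'"
proof (cases "rows_indep E A S")
  case True
  show ?thesis by (rule that[of S]) (simp_all add: True)
next
  case False
  then obtain T0 where T0: "T0 \<subseteq> S" "T0 \<noteq> {}" "\<forall>c\<in>A. even (card {i \<in> T0. {i, c} \<in> E})"
    unfolding rows_indep_def by blast
  with assms(2) have odd_j: "odd (card {i \<in> T0. {i, j} \<in> E})"
    unfolding rows_indep_def by blast
  obtain t where t: "t \<in> T0" using T0(2) by blast
  have "S - {t} \<subseteq> S" by blast
  moreover have "card S \<le> Suc (card (S - {t}))"
  proof -
    have "t \<in> S" using t T0(1) by blast
    then have "card S > 0" using assms(1) card_gt_0_iff by blast
    then show ?thesis using \<open>t \<in> S\<close> by (simp add: card_Diff_singleton)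
  qed
  moreover have "rows_indep E A (S - {t})"
    unfolding rows_indep_def
  proof (intro allI impI)
    fix T assume T: "T \<subseteq> S - {t} \<and> T \<noteq> {}"
    show "\<exists>c\<in>A. odd (card {i \<in> T. {i, c} \<in> E})"
    proof (rule ccontr)
      assume even_A: "\<not> (\<exists>c\<in>A. odd (card {i \<in> T. {i, c} \<in> E}))"
      with assms(2) T have odd_T: "odd (card {i \<in> T. {i, j} \<in> E})"
        unfolding rows_indep_def by blast
      define U where "U = (T - T0) \<union> (T0 - T)"
      have U: "U \<subseteq> S" "U \<noteq> {}" using T T0 t unfolding U_def by auto
      have fin: "finite T" "finite T0" using T T0(1) by (auto intro: finite_subset[OF _ assms(1)])
      have parity: "odd (card {i \<in> U. {i, c} \<in> E}) \<longleftrightarrow>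
          odd (card {i \<in> T. {i, c} \<in> E}) \<noteq> odd (card {i \<in> T0. {i, c} \<in> E})" for c
      proof -
        have "{i \<in> U. {i, c} \<in> E} = ({i \<in> T. {i, c} \<in> E} - {i \<in> T0. {i, c} \<in> E})
            \<union> ({i \<in> T0. {i, c} \<in> E} - {i \<in> T. {i, c} \<in> E})"
          unfolding U_def by auto
        then show ?thesis
          using odd_card_sym_diff[of "{i \<in> T. {i, c} \<in> E}" "{i \<in> T0. {i, c} \<in> E}"] fin by simp
      qed
      from assms(2) U obtain c where "c \<in> insert j A" "odd (card {i \<in> U. {i, c} \<in> E})"
        unfolding rows_indep_def by blast
      then show False using parity even_A odd_T odd_j T0(3) by auto
    qed
  qed
  ultimately show ?thesis by (rule that)
qed

lemma finite_indep_cards: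
  assumes "finite A"
  shows "finite {card S | S. S \<subseteq> A \<and> rows_indep E A S}"
proof -
  have "{card S | S. S \<subseteq> A \<and> rows_indep E A S} \<subseteq> card ` Pow A" by blast
  then show ?thesis using assms finite_subset by blast
qed

lemma indep_cards_nonempty: "{card S | S. S \<subseteq> A \<and> rows_indep E A S} \<noteq> {}"
  using rows_indep_empty by blast

lemma rk_induced_ge:
  assumes "finite A" "S \<subseteq> A" "rows_indep E A S"
  shows "card S \<le> rk_induced E A"
  unfolding rk_induced_def using assms by (intro Max_ge finite_indep_cards) blast+

lemma rk_induced_le:
  assumes "finite A" "\<And>S. S \<subseteq> A \<Longrightarrow> rows_indep E A S \<Longrightarrow> card S \<le> n"
  shows "rk_induced E A \<le> n"
  unfolding rk_induced_def
  using assms finite_indep_cards[OF assms(1)] indep_cards_nonempty by (intro Max.boundedI) blast+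

lemma rk_induced_witness:
  assumes "finite A"
  obtains S where "S \<subseteq> A" "rows_indep E A S" "card S = rk_induced E A"
proof -
  have "rk_induced E A \<in> {card S | S. S \<subseteq> A \<and> rows_indep E A S}"
    unfolding rk_induced_def using finite_indep_cards[OF assms] indep_cards_nonempty by (rule Max_in)
  then obtain S where "rk_induced E A = card S" "S \<subseteq> A" "rows_indep E A S" by auto
  then show ?thesis using that by simp
qed

text \<open>Adding isolated vertices (no edges to the old vertices nor among themselves)
  does not change the rank: their rows are zero, so they never occur in an
  independent set, and their columns vanish on all other rows.\<close>

lemma rk_induced_isolated:
  assumes "finite Y" "finite M"
    and isolated: "\<And>m y. m \<in> M \<Longrightarrow> y \<in> Y \<union> M \<Longrightarrow> {m, y} \<notin> E"
  shows "rk_induced E (Y \<union> M) = rk_induced E Y"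
proof (rule antisym)
  show "rk_induced E (Y \<union> M) \<le> rk_induced E Y"
  proof (rule rk_induced_le)
    fix S assume S: "S \<subseteq> Y \<union> M" "rows_indep E (Y \<union> M) S"
    have "S \<inter> M = {}"
      using rows_indep_nonzero_row[OF S(2)] isolated by blast
    then have "S \<subseteq> Y" using S(1) by blast
    moreover have "rows_indep E Y S"
    proof (rule rows_indep_drop_cols[OF S(2)])
      fix i j assume "i \<in> S" "j \<in> Y \<union> M - Y"
      then show "{i, j} \<notin> E" using isolated[of j i] S(1) by (auto simp: insert_commute)
    qed
    ultimately show "card S \<le> rk_induced E Y" using rk_induced_ge assms(1) by blast
  qed (use assms in simp)
next
  obtain S where S: "S \<subseteq> Y" "rows_indep E Y S" "card S = rk_induced E Y"
    using rk_induced_witness[OF assms(1)] by blast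
  have "rows_indep E (Y \<union> M) S" using rows_indep_mono_cols[OF S(2)] by blast
  then show "rk_induced E Y \<le> rk_induced E (Y \<union> M)"
    using rk_induced_ge[of "Y \<union> M" S E] assms(1,2) S by auto
qed

context
  fixes E :: "'a set set" and Y M :: "'a set" and w :: 'a
  assumes finite_Y: "finite Y" and finite_M: "finite M" and w_in_Y: "w \<in> Y"
    and disjoint: "M \<inter> Y = {}"
    and pendant: "\<And>m y. m \<in> M \<Longrightarrow> ({m, y} \<in> E) = (y = w)"
begin

lemma pendant': "m \<in> M \<Longrightarrow> ({y, m} \<in> E) = (y = w)"
  using pendant by (simp add: insert_commute)

lemma w_notin_M: "w \<notin> M"
  using w_in_Y disjoint by blast

text \<open>Lower bound: a maximal independent set of G[Y - {w}], together with w and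
  one leaf m, stays independent (the column of m detects w, the column of w
  detects m).\<close>

lemma rk_pendant_lower:
  assumes "M \<noteq> {}"
  shows "Suc (Suc (rk_induced E (Y - {w}))) \<le> rk_induced E (Y \<union> M)"
proof -
  obtain S0 where S0: "S0 \<subseteq> Y - {w}" "rows_indep E (Y - {w}) S0" "card S0 = rk_induced E (Y - {w})"
    using rk_induced_witness[of "Y - {w}"] finite_Y by blast
  obtain m where m: "m \<in> M" using assms by blast
  have m_notin: "m \<notin> S0" "m \<noteq> w" using S0(1) m disjoint w_notin_M by blast+
  have "rows_indep E (Y \<union> M) (insert w (insert m S0))"
    unfolding rows_indep_def
  proof (intro allI impI)
    fix T assume T: "T \<subseteq> insert w (insert m S0) \<and> T \<noteq> {}"
    show "\<exists>j\<in>Y \<union> M. odd (card {i \<in> T. {i, j} \<in> E})"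
    proof (cases "w \<in> T")
      case True
      then have "{i \<in> T. {i, m} \<in> E} = {w}" using pendant'[OF m] by auto
      then show ?thesis using m by (intro bexI[of _ m]) auto
    next
      case w_notin_T: False
      show ?thesis
      proof (cases "T \<inter> S0 = {}")
        case True
        then have "T = {m}" using T w_notin_T by blast
        then have "{i \<in> T. {i, w} \<in> E} = {m}" using pendant[OF m] by auto
        then show ?thesis using w_in_Y by (intro bexI[of _ w]) auto
      next
        case False
        then obtain j where j: "j \<in> Y - {w}" "odd (card {i \<in> T \<inter> S0. {i, j} \<in> E})"
          using S0(2) unfolding rows_indep_def by (meson Int_lower2)
        have "{i \<in> T. {i, j} \<in> E} = {i \<in> T \<inter> S0. {i, j} \<in> E}"
          using T w_notin_T pendant[OF m, of j] j(1) by (auto simp: insert_commute)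
        then show ?thesis using j by (intro bexI[of _ j]) auto
      qed
    qed
  qed
  moreover have "card (insert w (insert m S0)) = Suc (Suc (card S0))"
  proof -
    have "finite S0" "w \<notin> S0" using S0(1) finite_Y finite_subset by auto
    then show ?thesis using m_notin by simp
  qed
  moreover have "insert w (insert m S0) \<subseteq> Y \<union> M" using S0(1) m w_in_Y by blast
  ultimately show ?thesis
    using rk_induced_ge[of "Y \<union> M" "insert w (insert m S0)" E] finite_Y finite_M S0(3) by simp
qed

text \<open>Two leaves have the same row (a single 1 in column w), so an independent
  set contains at most one leaf.\<close>

lemma pendant_rows_at_most_one:
  assumes "rows_indep E A S" "finite S"
  shows "card (S \<inter> M) \<le> 1"
proof -
  have "m1 = m2" if "m1 \<in> S \<inter> M" "m2 \<in> S \<inter> M" for m1 m2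
  proof (rule ccontr)
    assume ne: "m1 \<noteq> m2"
    have "{m1, m2} \<subseteq> S \<and> {m1, m2} \<noteq> {}" using that by blast
    then obtain j where "odd (card {i \<in> {m1, m2}. {i, j} \<in> E})"
      using assms(1) unfolding rows_indep_def by blast
    moreover have "{i \<in> {m1, m2}. {i, j} \<in> E} = (if j = w then {m1, m2} else {})"
      using that pendant[of m1] pendant[of m2] by auto
    ultimately show False using ne by (simp split: if_splits)
  qed
  then show ?thesis using assms(2) by (simp add: card_le_Suc0_iff_eq)
qed

text \<open>An independent set containing a leaf m stays independent in G[Y - {w}]
  after removing the leaves and w: a subset T dependent there would have its
  only odd column at w, and then T + m would be dependent.\<close>

lemma pendant_indep_with_leaf:
  assumes indep: "rows_indep E (Y \<union> M) S" and S: "S \<subseteq> Y \<union> M" and m: "m \<in> S \<inter> M"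
  shows "rows_indep E (Y - {w}) (S - M - {w})"
  unfolding rows_indep_def
proof (intro allI impI)
  fix T assume T: "T \<subseteq> S - M - {w} \<and> T \<noteq> {}"
  show "\<exists>j\<in>Y - {w}. odd (card {i \<in> T. {i, j} \<in> E})"
  proof (rule ccontr)
    assume even: "\<not> (\<exists>j\<in>Y - {w}. odd (card {i \<in> T. {i, j} \<in> E}))"
    have TY: "T \<subseteq> Y - {w}" using T S by blast
    have no_leaf_col: "{i \<in> T'. {i, j} \<in> E} = {}" if "T' \<subseteq> Y - {w}" "j \<in> M" for T' j
      using that pendant'[OF that(2)] by auto
    obtain j where j: "j \<in> Y \<union> M" "odd (card {i \<in> T. {i, j} \<in> E})"
      using indep T unfolding rows_indep_def by blast
    have "j \<notin> M" using j(2) no_leaf_col[OF TY, of j] by (metis card.empty even_zero)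
    then have j_w: "j = w" using j(1) j(2) even by blast
    have fin_T: "finite T" using TY finite_Y finite_subset by blast
    have m_notin_T: "m \<notin> T" using T m by blast
    have "insert m T \<subseteq> S \<and> insert m T \<noteq> {}" using T m by blast
    then obtain j' where j': "j' \<in> Y \<union> M" "odd (card {i \<in> insert m T. {i, j'} \<in> E})"
      using indep unfolding rows_indep_def by blast
    consider "j' \<in> M" | "j' = w" | "j' \<in> Y - {w}" using j'(1) by blast
    then show False
    proof cases
      case 1
      have "{i \<in> insert m T. {i, j'} \<in> E} = {}"
        using no_leaf_col[OF TY 1] pendant[OF IntD2[OF m], of j'] 1 w_notin_M by auto
      then show False using j'(2) by (metis card.empty even_zero)
    next
      case 2
      have "{i \<in> insert m T. {i, j'} \<in> E} = insert m {i \<in> T. {i, j'} \<in> E}"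
        using 2 pendant[OF IntD2[OF m]] by auto
      then show False using j' j j_w 2 m_notin_T fin_T by simp
    next
      case 3
      have "{i \<in> insert m T. {i, j'} \<in> E} = {i \<in> T. {i, j'} \<in> E}"
        using 3 pendant[OF IntD2[OF m]] by auto
      then show False using j' even 3 by auto
    qed
  qed
qed

lemma rk_pendant_upper: "rk_induced E (Y \<union> M) \<le> Suc (Suc (rk_induced E (Y - {w})))"
proof (rule rk_induced_le)
  show "finite (Y \<union> M)" using finite_Y finite_M by simp
  fix S assume S: "S \<subseteq> Y \<union> M" and indep: "rows_indep E (Y \<union> M) S"
  have fin_S: "finite S" using finite_subset[OF S] finite_Y finite_M by simp
  have fin_Yw: "finite (Y - {w})" using finite_Y by simp
  show "card S \<le> Suc (Suc (rk_induced E (Y - {w})))"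
  proof (cases "S \<inter> M = {}")
    case False
    then obtain m where m: "m \<in> S \<inter> M" by blast
    have "S \<subseteq> (S - M - {w}) \<union> (S \<inter> M) \<union> {w}" by blast
    then have "card S \<le> card (S - M - {w}) + card (S \<inter> M) + 1"
      using fin_S card_mono[of "(S - M - {w}) \<union> (S \<inter> M) \<union> {w}" S]
        card_Un_le[of "(S - M - {w}) \<union> (S \<inter> M)" "{w}"] card_Un_le[of "S - M - {w}" "S \<inter> M"]
      by simp
    moreover have "card (S \<inter> M) \<le> 1" using pendant_rows_at_most_one[OF indep fin_S] .
    moreover have "card (S - M - {w}) \<le> rk_induced E (Y - {w})"
      using rk_induced_ge[OF fin_Yw _ pendant_indep_with_leaf[OF indep S m]] S by blast
    ultimately show ?thesis by simp
  next
    case True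
    have "rows_indep E (Y \<union> M) (S - {w})" using rows_indep_subset[OF indep] by blast
    then have indep_w: "rows_indep E (insert w (Y - {w})) (S - {w})"
    proof (rule rows_indep_drop_cols)
      fix i j assume "i \<in> S - {w}" "j \<in> Y \<union> M - insert w (Y - {w})"
      then show "{i, j} \<notin> E" using pendant'[of j i] by auto
    qed
    obtain S' where S': "S' \<subseteq> S - {w}" "card (S - {w}) \<le> Suc (card S')"
        "rows_indep E (Y - {w}) S'"
      by (rule rows_indep_remove_column[OF finite_Diff[OF fin_S] indep_w])
    have "card S' \<le> rk_induced E (Y - {w})"
      using rk_induced_ge[OF fin_Yw _ S'(3)] S'(1) S True by blast
    moreover have "card S \<le> Suc (card (S - {w}))"
      using fin_S by (cases "w \<in> S") (auto simp: card_Diff_singleton_if)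
    ultimately show ?thesis using S'(2) by simp
  qed
qed

lemma rk_induced_pendant:
  assumes "M \<noteq> {}"
  shows "rk_induced E (Y \<union> M) = Suc (Suc (rk_induced E (Y - {w})))"
  using rk_pendant_lower[OF assms] rk_pendant_upper by simp

end

lemma rows_indep_image:
  assumes inj: "inj_on f B" and "S \<subseteq> B"
    and edges: "\<And>i j. i \<in> B \<Longrightarrow> j \<in> B \<Longrightarrow> ({f i, f j} \<in> E') = ({i, j} \<in> E)"
  shows "rows_indep E' (f ` B) (f ` S) \<longleftrightarrow> rows_indep E B S"
proof -
  have col: "card {i \<in> f ` T. {i, f j} \<in> E'} = card {i \<in> T. {i, j} \<in> E}"
    if T: "T \<subseteq> S" and j: "j \<in> B" for T j
  proof -
    have "({f i, f j} \<in> E') = ({i, j} \<in> E)" if "i \<in> T" for i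
      using edges[OF _ j] that T \<open>S \<subseteq> B\<close> by blast
    then have "{i \<in> f ` T. {i, f j} \<in> E'} = f ` {i \<in> T. {i, j} \<in> E}" by auto
    moreover have "inj_on f {i \<in> T. {i, j} \<in> E}"
      by (rule inj_on_subset[OF inj]) (use T \<open>S \<subseteq> B\<close> in auto)
    ultimately show ?thesis by (simp add: card_image)
  qed
  show ?thesis unfolding rows_indep_def
  proof (intro iffI allI impI)
    fix T assume indep': "\<forall>T'. T' \<subseteq> f ` S \<and> T' \<noteq> {} \<longrightarrow>
        (\<exists>j\<in>f ` B. odd (card {i \<in> T'. {i, j} \<in> E'}))"
      and T: "T \<subseteq> S \<and> T \<noteq> {}"
    have "f ` T \<subseteq> f ` S \<and> f ` T \<noteq> {}" using T by blast
    then obtain j' where "j' \<in> f ` B" "odd (card {i \<in> f ` T. {i, j'} \<in> E'})"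
      using indep' by blast
    then obtain j where "j \<in> B" "odd (card {i \<in> f ` T. {i, f j} \<in> E'})" by blast
    then show "\<exists>j\<in>B. odd (card {i \<in> T. {i, j} \<in> E})" using col T by auto
  next
    fix T' assume indep: "\<forall>T. T \<subseteq> S \<and> T \<noteq> {} \<longrightarrow> (\<exists>j\<in>B. odd (card {i \<in> T. {i, j} \<in> E}))"
      and T': "T' \<subseteq> f ` S \<and> T' \<noteq> {}"
    then obtain T where T: "T \<subseteq> S" "T' = f ` T" by (auto simp: subset_image_iff)
    then obtain j where "j \<in> B" "odd (card {i \<in> T. {i, j} \<in> E})" using indep T' by blast
    then show "\<exists>j\<in>f ` B. odd (card {i \<in> T'. {i, j} \<in> E'})" using col T by auto
  qed
qed

lemma rk_induced_image:
  assumes "finite B" "inj_on f B"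
    and edges: "\<And>i j. i \<in> B \<Longrightarrow> j \<in> B \<Longrightarrow> ({f i, f j} \<in> E') = ({i, j} \<in> E)"
  shows "rk_induced E' (f ` B) = rk_induced E B"
proof (rule antisym)
  show "rk_induced E' (f ` B) \<le> rk_induced E B"
  proof (rule rk_induced_le)
    fix S' assume S': "S' \<subseteq> f ` B" "rows_indep E' (f ` B) S'"
    then obtain S where S: "S \<subseteq> B" "S' = f ` S" by (auto simp: subset_image_iff)
    then have "card S' = card S" using assms(2) by (simp add: card_image inj_on_subset)
    moreover have "rows_indep E B S" using S' S rows_indep_image[OF assms(2) S(1) edges] by simp
    ultimately show "card S' \<le> rk_induced E B" using rk_induced_ge[OF assms(1) S(1)] by simp
  qed (use assms in simp)
next
  obtain S where S: "S \<subseteq> B" "rows_indep E B S" "card S = rk_induced E B"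
    using rk_induced_witness[OF assms(1)] by blast
  then have "rows_indep E' (f ` B) (f ` S)" using rows_indep_image[OF assms(2) S(1) edges] by simp
  moreover have "card (f ` S) = card S" using S(1) assms(2) by (simp add: card_image inj_on_subset)
  ultimately show "rk_induced E B \<le> rk_induced E' (f ` B)"
    using rk_induced_ge[of "f ` B" "f ` S" E'] assms(1) S by auto
qed

lemma interlace_poly_image:
  assumes "finite V" "inj_on f V"
    and edges: "\<And>i j. i \<in> V \<Longrightarrow> j \<in> V \<Longrightarrow> ({f i, f j} \<in> E') = ({i, j} \<in> E)"
  shows "interlace_poly (f ` V) E' u x = interlace_poly V E u x"
proof -
  have "interlace_poly (f ` V) E' u x = (\<Sum>B\<in>Pow V. x ^ card (f ` B) * u ^ rk_induced E' (f ` B))"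
    unfolding interlace_poly_def image_Pow_surj[OF refl, symmetric]
    by (simp add: sum.reindex[OF inj_on_image_Pow[OF assms(2)]])
  also have "\<dots> = interlace_poly V E u x"
    unfolding interlace_poly_def
  proof (rule sum.cong)
    fix B assume B: "B \<in> Pow V"
    then have "finite B" "inj_on f B" using assms(1,2) by (auto intro: finite_subset inj_on_subset)
    moreover have "({f i, f j} \<in> E') = ({i, j} \<in> E)" if "i \<in> B" "j \<in> B" for i j
      using edges that B by blast
    ultimately show "x ^ card (f ` B) * u ^ rk_induced E' (f ` B) = x ^ card B * u ^ rk_induced E B"
      by (simp add: card_image rk_induced_image)
  qed simp
  finally show ?thesis .
qed

lemma sum_Pow_insert:
  assumes "a \<notin> F" "finite F"
  shows "sum g (Pow (insert a F)) = sum g (Pow F) + (\<Sum>A\<in>Pow F. g (insert a A))"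
proof -
  have inj: "inj_on (insert a) (Pow F)"
    using assms(1) by (intro inj_onI) (metis Diff_insert_absorb PowD subsetD)
  have "sum g (Pow (insert a F)) = sum g (Pow F) + sum g (insert a ` Pow F)"
    unfolding Pow_insert using assms by (intro sum.union_disjoint) auto
  also have "sum g (insert a ` Pow F) = (\<Sum>A\<in>Pow F. g (insert a A))"
    using sum.reindex[OF inj] by simp
  finally show ?thesis .
qed

lemma sum_Pow_Un:
  assumes "finite X" "finite L" "X \<inter> L = {}"
  shows "sum f (Pow (X \<union> L)) = (\<Sum>A\<in>Pow X. \<Sum>M\<in>Pow L. f (A \<union> M))"
proof -
  have img: "Pow (X \<union> L) = (\<lambda>(A, M). A \<union> M) ` (Pow X \<times> Pow L)"
  proof (intro equalityI subsetI)
    fix Y assume "Y \<in> Pow (X \<union> L)"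
    then have "Y = (\<lambda>(A, M). A \<union> M) (Y \<inter> X, Y \<inter> L)" "(Y \<inter> X, Y \<inter> L) \<in> Pow X \<times> Pow L"
      by auto
    then show "Y \<in> (\<lambda>(A, M). A \<union> M) ` (Pow X \<times> Pow L)" by blast
  qed auto
  have inj: "inj_on (\<lambda>(A, M). A \<union> M) (Pow X \<times> Pow L)"
  proof (rule inj_onI, clarify)
    fix A M A' M' assume h: "A \<subseteq> X" "M \<subseteq> L" "A' \<subseteq> X" "M' \<subseteq> L" "A \<union> M = A' \<union> M'"
    have "A = (A \<union> M) \<inter> X" "A' = (A' \<union> M') \<inter> X" "M = (A \<union> M) \<inter> L" "M' = (A' \<union> M') \<inter> L"
      using h assms(3) by auto
    then show "A = A' \<and> M = M'" using h(5) by metis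
  qed
  have "sum f (Pow (X \<union> L)) = (\<Sum>(A, M)\<in>Pow X \<times> Pow L. f (A \<union> M))"
    unfolding img by (subst sum.reindex[OF inj]) (simp add: case_prod_unfold comp_def)
  also have "\<dots> = (\<Sum>A\<in>Pow X. \<Sum>M\<in>Pow L. f (A \<union> M))"
    by (rule sum.cartesian_product[symmetric])
  finally show ?thesis .
qed

lemma sum_Pow_power_card:
  fixes x :: "'b :: comm_semiring_1"
  assumes "finite L"
  shows "(\<Sum>M\<in>Pow L. x ^ card M) = (1 + x) ^ card L"
  using prod_add[OF assms, of "\<lambda>_. x" "\<lambda>_. 1"] by (simp add: add.commute)

lemma rk_induced_add_leaves:
  assumes "finite A" "finite M" "M \<noteq> {}" "A \<inter> M = {}" "w \<notin> M"
    and pendant: "\<And>m y. m \<in> M \<Longrightarrow> ({m, y} \<in> E) = (y = w)"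
  shows "rk_induced E (A \<union> M) =
    (if w \<in> A then Suc (Suc (rk_induced E (A - {w}))) else rk_induced E A)"
proof (cases "w \<in> A")
  case True
  have "M \<inter> A = {}" using assms(4) by blast
  then show ?thesis using rk_induced_pendant[OF assms(1,2) True _ pendant assms(3)] True by simp
next
  case False
  have "{m, y} \<notin> E" if "m \<in> M" "y \<in> A \<union> M" for m y
    using pendant[OF that(1), of y] that(2) False assms(5) by auto
  then show ?thesis using rk_induced_isolated[OF assms(1,2)] False by simp
qed

text \<open>Attaching a set L of leaves to the vertex w of a graph
  on X gives
    P(X \<union> L) = P(X) + ((1 + x)^|L| - 1) (1 + x u^2) P(X - {w}):
  the subsets without leaves give P(X); for a subset A of X together with a
  nonempty set of leaves the rank is computed by the previous lemma, and
  splitting A according to whether it contains w yields the second term.\<close>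

lemma interlace_poly_add_leaves:
  fixes u x :: real
  assumes fin: "finite X" "finite L" and "w \<in> X" "X \<inter> L = {}"
    and pendant: "\<And>m y. m \<in> L \<Longrightarrow> ({m, y} \<in> E) = (y = w)"
  shows "interlace_poly (X \<union> L) E u x = interlace_poly X E u x
           + ((1 + x) ^ card L - 1) * (1 + x * u\<^sup>2) * interlace_poly (X - {w}) E u x"
proof -
  define f where "f = (\<lambda>A. x ^ card A * u ^ rk_induced E A)"
  define g where "g = (\<lambda>A. x ^ card A *
    u ^ (if w \<in> A then Suc (Suc (rk_induced E (A - {w}))) else rk_induced E A))"
  have P_f: "interlace_poly Z E u x = sum f (Pow Z)" for Z
    unfolding interlace_poly_def f_def ..
  have w_notin_L: "w \<notin> L" using assms(3,4) by blast
  have leaf_sets: "(\<Sum>M\<in>Pow L - {{}}. x ^ card M) = (1 + x) ^ card L - 1"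
    using sum.remove[of "Pow L" "{}" "\<lambda>M. x ^ card M"] sum_Pow_power_card[OF fin(2), of x] fin(2)
    by simp
  have with_leaves: "(\<Sum>M\<in>Pow L. f (A \<union> M)) = f A + ((1 + x) ^ card L - 1) * g A"
    if A: "A \<subseteq> X" for A
  proof -
    have "f (A \<union> M) = x ^ card M * g A" if M: "M \<in> Pow L - {{}}" for M
    proof -
      have M_leaves: "M \<subseteq> L" "M \<noteq> {}" using M by auto
      have finite: "finite A" "finite M"
        using finite_subset[OF A fin(1)] finite_subset[OF M_leaves(1) fin(2)] .
      have disjoint: "A \<inter> M = {}" using A M_leaves(1) assms(4) by blast
      have "rk_induced E (A \<union> M) =
          (if w \<in> A then Suc (Suc (rk_induced E (A - {w}))) else rk_induced E A)"
        using M_leaves w_notin_L pendant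
        by (intro rk_induced_add_leaves[OF finite M_leaves(2) disjoint]) auto
      moreover have "card (A \<union> M) = card A + card M"
        using card_Un_disjoint[OF finite disjoint] .
      ultimately show ?thesis unfolding f_def g_def by (simp add: power_add)
    qed
    then have "(\<Sum>M\<in>Pow L - {{}}. f (A \<union> M)) = (\<Sum>M\<in>Pow L - {{}}. x ^ card M) * g A"
      unfolding sum_distrib_right by (rule sum.cong[OF refl])
    then show ?thesis
      using sum.remove[of "Pow L" "{}" "\<lambda>M. f (A \<union> M)"] fin(2) leaf_sets by simp
  qed
  have split_w: "sum g (Pow X) = (1 + x * u\<^sup>2) * sum f (Pow (X - {w}))"
  proof -
    have X: "X = insert w (X - {w})" "w \<notin> X - {w}" "finite (X - {w})"
      using assms(3) fin(1) by auto
    have "sum g (Pow X) = (\<Sum>A\<in>Pow (X - {w}). g A) + (\<Sum>A\<in>Pow (X - {w}). g (insert w A))"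
      by (subst X(1), rule sum_Pow_insert[OF X(2,3)])
    also have "(\<Sum>A\<in>Pow (X - {w}). g A) = sum f (Pow (X - {w}))"
      unfolding f_def g_def by (rule sum.cong) auto
    also have "(\<Sum>A\<in>Pow (X - {w}). g (insert w A)) = (\<Sum>A\<in>Pow (X - {w}). x * u\<^sup>2 * f A)"
    proof (rule sum.cong)
      fix A assume "A \<in> Pow (X - {w})"
      then have A: "A \<subseteq> X - {w}" by simp
      then have "finite A" "w \<notin> A" "insert w A - {w} = A"
        using finite_subset[OF A X(3)] by auto
      then show "g (insert w A) = x * u\<^sup>2 * f A"
        unfolding f_def g_def by (simp add: power2_eq_square)
    qed simp
    finally show ?thesis by (simp add: sum_distrib_left algebra_simps)
  qed
  have "interlace_poly (X \<union> L) E u x = (\<Sum>A\<in>Pow X. \<Sum>M\<in>Pow L. f (A \<union> M))"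
    unfolding P_f by (rule sum_Pow_Un[OF fin assms(4)])
  also have "\<dots> = sum f (Pow X) + ((1 + x) ^ card L - 1) * sum g (Pow X)"
    by (simp add: with_leaves sum.distrib sum_distrib_left)
  finally show ?thesis unfolding P_f split_w by (simp add: algebra_simps)
qed

definition leaves :: "'a set \<Rightarrow> nat \<Rightarrow> ('a + 'a \<times> nat) set" where
  "leaves W k = Inr ` (W \<times> {1..k})"

lemma comb_all_V_eq: "comb_all_V V k = Inl ` V \<union> leaves V k"
  unfolding comb_all_V_def leaves_def by auto

lemma leaves_empty [simp]: "leaves {} k = {}"
  unfolding leaves_def by simp

lemma leaves_insert: "leaves (insert w W) k = leaves W k \<union> leaves {w} k"
  unfolding leaves_def by auto

lemma finite_leaves: "finite W \<Longrightarrow> finite (leaves W k)"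
  unfolding leaves_def by simp

lemma card_leaves_singleton: "card (leaves {w} k) = k"
  unfolding leaves_def by (simp add: card_image)

lemma Inl_notin_leaves [simp]: "Inl a \<notin> leaves W k"
  unfolding leaves_def by auto

lemma comb_leaf_adj:
  assumes "w \<in> V" "m \<in> leaves {w} k"
  shows "({m, y} \<in> comb_all_E V E k) = (y = Inl w)"
proof -
  obtain i where i: "m = Inr (w, i)" "1 \<le> i" "i \<le> k"
    using assms(2) unfolding leaves_def by auto
  have "{m, y} \<notin> image Inl ` E" using i(1) by auto
  moreover have "({m, y} \<in> {{Inl a, Inr (a, i)} | a i. a \<in> V \<and> 1 \<le> i \<and> i \<le> k}) = (y = Inl w)"
    using i assms(1) by (auto simp: doubleton_eq_iff)
  ultimately show ?thesis unfolding comb_all_E_def by blast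
qed

lemma comb_Inl_adj: "({Inl i, Inl j} \<in> comb_all_E V E k) = ({i, j} \<in> E)"
proof -
  have "{Inl i, Inl j} \<notin> {{Inl a, Inr (a, i)} | a i. a \<in> V \<and> 1 \<le> i \<and> i \<le> k}"
    by (auto simp: doubleton_eq_iff)
  moreover have "({Inl i, Inl j} \<in> image Inl ` E) = ({i, j} \<in> E)"
    using inj_image_mem_iff[OF inj_on_image[of Inl UNIV], of "{i, j}" E] by simp
  ultimately show ?thesis unfolding comb_all_E_def by blast
qed

text \<open>The recursion satisfied by  \<Sum>B \<subseteq> V. g B p^|W - B|  when a vertex w \<in> V
  is added to W; it has the same shape as the comb recursion.\<close>

lemma sum_Pow_weight_insert:
  fixes g :: "'a set \<Rightarrow> 'b :: comm_ring_1"
  assumes "finite V" "finite W" "w \<in> V" "w \<notin> W"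
  shows "(\<Sum>B\<in>Pow V. g B * p ^ card (insert w W - B)) =
    (\<Sum>B\<in>Pow V. g B * p ^ card (W - B)) + (p - 1) * (\<Sum>B\<in>Pow (V - {w}). g B * p ^ card (W - B))"
proof -
  define V0 where "V0 = V - {w}"
  have V: "V = insert w V0" "w \<notin> V0" "finite V0" using assms(1,3) unfolding V0_def by auto
  define S0 where "S0 = (\<Sum>B\<in>Pow V0. g B * p ^ card (W - B))"
  define S1 where "S1 = (\<Sum>B\<in>Pow V0. g (insert w B) * p ^ card (W - insert w B))"
  have "(\<Sum>B\<in>Pow V. g B * p ^ card (W - B)) = S0 + S1"
    unfolding S0_def S1_def V(1) by (rule sum_Pow_insert[OF V(2,3)])
  moreover have "(\<Sum>B\<in>Pow V0. g B * p ^ card (insert w W - B)) = p * S0"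
    unfolding S0_def sum_distrib_left
  proof (rule sum.cong)
    fix B assume "B \<in> Pow V0"
    then have "insert w W - B = insert w (W - B)" using V(2) by auto
    then have "card (insert w W - B) = Suc (card (W - B))" using assms(2,4) by simp
    then show "g B * p ^ card (insert w W - B) = p * (g B * p ^ card (W - B))" by simp
  qed simp
  moreover have "(\<Sum>B\<in>Pow V0. g (insert w B) * p ^ card (insert w W - insert w B)) = S1"
  proof -
    have "insert w W - insert w B = W - insert w B" for B by auto
    then show ?thesis unfolding S1_def by simp
  qed
  moreover have "(\<Sum>B\<in>Pow V. g B * p ^ card (insert w W - B))
    = (\<Sum>B\<in>Pow V0. g B * p ^ card (insert w W - B))
      + (\<Sum>B\<in>Pow V0. g (insert w B) * p ^ card (insert w W - insert w B))"
    unfolding V(1) by (rule sum_Pow_insert[OF V(2,3)])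
  ultimately show ?thesis unfolding S0_def V0_def by (simp add: algebra_simps)
qed

lemma interlace_poly_partial_combs:
  fixes u x :: real
  assumes "finite V" "finite W" "W \<subseteq> V'" "V' \<subseteq> V"
  shows "interlace_poly (Inl ` V' \<union> leaves W k) (comb_all_E V E k) u x
    = (\<Sum>B\<in>Pow V'. x ^ card B * u ^ rk_induced E B * comb_p k u x ^ card (W - B))"
  using assms(2-4)
proof (induction W arbitrary: V' rule: finite_induct)
  case empty
  have "finite V'" using empty.prems(2) assms(1) by (rule finite_subset)
  then have "interlace_poly (Inl ` V') (comb_all_E V E k) u x = interlace_poly V' E u x"
    by (rule interlace_poly_image) (simp_all add: comb_Inl_adj)
  then show ?case unfolding interlace_poly_def by simp
next
  case (insert w W)
  define X where "X = Inl ` V' \<union> leaves W k"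
  define p where "p = comb_p k u x"
  let ?P = "\<lambda>Z. interlace_poly Z (comb_all_E V E k) u x"
  let ?S = "\<lambda>V' W. \<Sum>B\<in>Pow V'. x ^ card B * u ^ rk_induced E B * p ^ card (W - B)"
  have w: "w \<in> V'" "w \<in> V" using insert.prems by auto
  have fin_V': "finite V'" using insert.prems(2) assms(1) by (rule finite_subset)
  have fin_X: "finite X" unfolding X_def using fin_V' finite_leaves[OF insert.hyps(1)] by simp
  have fin_L: "finite (leaves {w} k)" by (simp add: finite_leaves)
  have X_L: "X \<inter> leaves {w} k = {}" unfolding X_def leaves_def using insert.hyps(2) by auto
  have w_X: "Inl w \<in> X" unfolding X_def using w(1) by simp
  have X_w: "X - {Inl w} = Inl ` (V' - {w}) \<union> leaves W k" unfolding X_def by auto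
  have factor: "((1 + x) ^ card (leaves {w} k) - 1) * (1 + x * u\<^sup>2) = p - 1"
    by (simp add: card_leaves_singleton p_def comb_p_def algebra_simps)
  have IH_X: "?P X = ?S V' W"
    unfolding X_def p_def by (rule insert.IH) (use insert.prems in auto)
  have IH_X_w: "?P (X - {Inl w}) = ?S (V' - {w}) W"
    unfolding X_w p_def by (rule insert.IH) (use insert.prems insert.hyps(2) in auto)
  have "?P (Inl ` V' \<union> leaves (insert w W) k) = ?P (X \<union> leaves {w} k)"
    unfolding X_def leaves_insert[of w W k] by (simp add: Un_assoc)
  also have "\<dots> = ?P X + (p - 1) * ?P (X - {Inl w})"
  proof -
    have "?P (X \<union> leaves {w} k) = ?P X
        + ((1 + x) ^ card (leaves {w} k) - 1) * (1 + x * u\<^sup>2) * ?P (X - {Inl w})"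
      by (rule interlace_poly_add_leaves[OF fin_X fin_L w_X X_L]) (rule comb_leaf_adj[OF w(2)])
    then show ?thesis unfolding factor .
  qed
  also have "\<dots> = ?S V' W + (p - 1) * ?S (V' - {w}) W"
    unfolding IH_X IH_X_w ..
  also have "\<dots> = ?S V' (insert w W)"
    by (rule sum_Pow_weight_insert[OF fin_V' insert.hyps(1) w(1) insert.hyps(2), symmetric])
  finally show ?case unfolding p_def .
qed

lemma sum_Pow_rescale:
  fixes x p :: "'b :: field"
  assumes "finite V" "p \<noteq> 0"
  shows "(\<Sum>B\<in>Pow V. x ^ card B * h B * p ^ card (V - B))
    = p ^ card V * (\<Sum>B\<in>Pow V. (x / p) ^ card B * h B)"
  unfolding sum_distrib_left
proof (rule sum.cong)
  fix B assume "B \<in> Pow V"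
  then have "card V = card (V - B) + card B"
    using assms(1) by (simp add: card_Diff_subset card_mono finite_subset)
  then have "p ^ card V * (x / p) ^ card B = p ^ card (V - B) * (p ^ card B * (x / p) ^ card B)"
    by (simp only: power_add mult.assoc)
  also have "p ^ card B * (x / p) ^ card B = (p * (x / p)) ^ card B"
    by (rule power_mult_distrib[symmetric])
  also have "p * (x / p) = x" using assms(2) by simp
  finally have scaled: "p ^ card V * (x / p) ^ card B = p ^ card (V - B) * x ^ card B" .
  have "p ^ card V * ((x / p) ^ card B * h B) = (p ^ card V * (x / p) ^ card B) * h B"
    by (simp only: mult.assoc)
  also have "\<dots> = x ^ card B * h B * p ^ card (V - B)"
    unfolding scaled by (simp only: ac_simps)
  finally show "x ^ card B * h B * p ^ card (V - B) = p ^ card V * ((x / p) ^ card B * h B)" ..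
qed simp

theorem mainTheorem6:
  fixes V :: "'a set" and E :: "'a set set" and k :: nat and u x :: real
  assumes "is_graph V E" and "k \<ge> 1" and "comb_p k u x \<noteq> 0"
  shows "interlace_poly (comb_all_V V k) (comb_all_E V E k) u x
         = comb_p k u x ^ card V * interlace_poly V E u (x / comb_p k u x)"
proof -
  have fin: "finite V" using assms(1) unfolding is_graph_def by blast
  have "interlace_poly (comb_all_V V k) (comb_all_E V E k) u x
      = (\<Sum>B\<in>Pow V. x ^ card B * u ^ rk_induced E B * comb_p k u x ^ card (V - B))"
    unfolding comb_all_V_eq by (rule interlace_poly_partial_combs[OF fin fin order.refl order.refl])
  also have "\<dots> = comb_p k u x ^ card V * interlace_poly V E u (x / comb_p k u x)"
    unfolding interlace_poly_def by (rule sum_Pow_rescale[OF fin assms(3)])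
  finally show ?thesis .
qed

end
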